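(* Let $T$ be a $C_{p^rq^s}$-transfer system and let $(a,b)$ be the lexicographically smallest vertex of its connected component in $T$. Then every vertex $(x,y)$ in that connected component satisfies $a\le x$ and $b\le y$.
   Context: $p,q$ are distinct primes and $r,s\ge 0$ integers. The subgroups of the cyclic group $C_{p^rq^s}$ are identified with grid points $(i,j)$, $0\le i\le r$, $0\le j\le s$, where $(i,j)$ stands for $C_{p^iq^j}$; $(i,j)\le(i',j')$ as subgroups iff $i\le i'$ and $j\le j'$, and intersection is $(\min(i,i'),\min(j,j'))$. A $C_{p^rq^s}$-transfer system is a partial order $\to$ on these vertices such that: $(i_1,j_1)\to(i_2,j_2)$ implies $i_1\le i_2$, $j_1\le j_2$; it is reflexive and transitive; and $(i_1,j_1)\to(i_2,j_2)$ implies $(\min\{i_1,a\},\min\{j_1,b\})\to(\min\{i_2,a\},\min\{j_2,b\})$ for every vertex $(a,b)$. Connected components are those of the underlying undirected graph. Lexicographic order: $(a,b)<_L(c,d)$ if $a<c$, or $a=c$ and $b<d$. *)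

theory Defs
  imports "HOL-Computational_Algebra.Primes"
begin

text \<open>Vertices of the subgroup lattice of the cyclic group of order p^r q^s:
  (i,j) stands for the subgroup of order p^i q^j.\<close>
definition grid :: "nat \<Rightarrow> nat \<Rightarrow> (nat \<times> nat) set" where
  "grid r s = {0..r} \<times> {0..s}"

definition transfer_system :: "nat \<Rightarrow> nat \<Rightarrow> (nat \<times> nat \<Rightarrow> nat \<times> nat \<Rightarrow> bool) \<Rightarrow> bool" where
  "transfer_system r s T \<longleftrightarrow>
     (\<forall>u v. T u v \<longrightarrow> u \<in> grid r s \<and> v \<in> grid r s) \<and>
     (\<forall>i1 j1 i2 j2. T (i1, j1) (i2, j2) \<longrightarrow> i1 \<le> i2 \<and> j1 \<le> j2) \<and>
     (\<forall>u \<in> grid r s. T u u) \<and>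
     (\<forall>u v w. T u v \<longrightarrow> T v w \<longrightarrow> T u w) \<and>
     (\<forall>i1 j1 i2 j2 a b. T (i1, j1) (i2, j2) \<longrightarrow> (a, b) \<in> grid r s \<longrightarrow>
         T (min i1 a, min j1 b) (min i2 a, min j2 b))"

definition component :: "(nat \<times> nat \<Rightarrow> nat \<times> nat \<Rightarrow> bool) \<Rightarrow> nat \<times> nat \<Rightarrow> (nat \<times> nat) set" where
  "component T v = {w. (\<lambda>x y. T x y \<or> T y x)\<^sup>*\<^sup>* v w}"

definition lex_less :: "nat \<times> nat \<Rightarrow> nat \<times> nat \<Rightarrow> bool" where
  "lex_less u v \<longleftrightarrow> fst u < fst v \<or> (fst u = fst v \<and> snd u < snd v)"

end

theory Submission
  imports Defs
begin

text \<open>Intersecting with the subgroup (r, y) keeps the component of (x, y) and moves (a, b)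
  to (a, min b y). So (a, min b y) lies in the component of (a, b), and lexicographic
  minimality of (a, b) forces min b y = b; a \<le> x is lexicographic minimality itself.\<close>

lemma component_symclp: "component T v = {w. (symclp T)\<^sup>*\<^sup>* v w}"
proof -
  have "(\<lambda>x y. T x y \<or> T y x) = symclp T"
    by (simp add: fun_eq_iff symclp_def)
  then show ?thesis
    by (simp add: component_def)
qed

lemma component_sym: "w \<in> component T v \<Longrightarrow> v \<in> component T w"
  by (simp add: component_symclp rtranclp_symclp_sym)

lemma component_trans: "u \<in> component T v \<Longrightarrow> w \<in> component T u \<Longrightarrow> w \<in> component T v"
  by (auto simp: component_symclp)

lemma component_map:
  assumes "\<And>x y. T x y \<Longrightarrow> T (f x) (f y)" and "w \<in> component T v"
  shows "f w \<in> component T (f v)"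
proof -
  have "(symclp T)\<^sup>*\<^sup>* v w"
    using assms(2) by (simp add: component_symclp)
  then have "(symclp T)\<^sup>*\<^sup>* (f v) (f w)"
  proof (induction rule: rtranclp_induct)
    case base
    then show ?case by simp
  next
    case (step y z)
    from \<open>symclp T y z\<close> have "symclp T (f y) (f z)"
      by cases (blast intro: assms(1) symclpI1 symclpI2)+
    with step.IH show ?case
      by (rule rtranclp.rtrancl_into_rtrancl)
  qed
  then show ?thesis
    by (simp add: component_symclp)
qed

lemma transfer_system_min_closed:
  assumes "transfer_system r s T" and "(c, d) \<in> grid r s" and "T u w"
  shows "T (min (fst u) c, min (snd u) d) (min (fst w) c, min (snd w) d)"
proof -
  obtain i1 j1 i2 j2 where u: "u = (i1, j1)" and w: "w = (i2, j2)"
    by fastforce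
  have "T (i1, j1) (i2, j2) \<longrightarrow> (c, d) \<in> grid r s \<longrightarrow>
      T (min i1 c, min j1 d) (min i2 c, min j2 d)"
    using assms(1) unfolding transfer_system_def by blast
  then show ?thesis
    using assms(2,3) u w by simp
qed

lemma component_min_closed:
  assumes "transfer_system r s T" and "(c, d) \<in> grid r s" and "w \<in> component T v"
  shows "(min (fst w) c, min (snd w) d) \<in> component T (min (fst v) c, min (snd v) d)"
  using component_map[where f = "\<lambda>u. (min (fst u) c, min (snd u) d)",
      OF transfer_system_min_closed[OF assms(1,2)] assms(3)]
  by simp

lemma component_subset_grid:
  assumes "transfer_system r s T" and "v \<in> grid r s"
  shows "component T v \<subseteq> grid r s"
proof
  have edge: "T u w \<Longrightarrow> u \<in> grid r s \<and> w \<in> grid r s" for u w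
    using assms(1) unfolding transfer_system_def by blast
  fix w
  assume "w \<in> component T v"
  then have "(symclp T)\<^sup>*\<^sup>* v w"
    by (simp add: component_symclp)
  then show "w \<in> grid r s"
    by induction (use assms(2) edge in \<open>auto elim: symclpE\<close>)
qed

theorem mainTheorem9:
  fixes p q r s :: nat and T :: "nat \<times> nat \<Rightarrow> nat \<times> nat \<Rightarrow> bool"
    and v :: "nat \<times> nat" and a b :: nat
  assumes "prime p" and "prime q" and "p \<noteq> q"
    and "transfer_system r s T"
    and "v \<in> grid r s"
    and "(a, b) \<in> component T v"
    and "\<forall>w \<in> component T v. w \<noteq> (a, b) \<longrightarrow> lex_less (a, b) w"
  shows "\<forall>x y. (x, y) \<in> component T v \<longrightarrow> a \<le> x \<and> b \<le> y"
proof (intro allI impI)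
  fix x y
  assume xy: "(x, y) \<in> component T v"
  have "a \<le> x"
    using assms(7) xy by (force simp: lex_less_def)
  have "(x, y) \<in> grid r s"
    using component_subset_grid[OF assms(4,5)] xy by blast
  then have "(r, y) \<in> grid r s" and "x \<le> r"
    by (auto simp: grid_def)
  have "(x, y) \<in> component T (a, b)"
    using component_sym[OF assms(6)] xy by (rule component_trans)
  from component_min_closed[OF assms(4) \<open>(r, y) \<in> grid r s\<close> this]
  have "(x, y) \<in> component T (a, min b y)"
    using \<open>a \<le> x\<close> \<open>x \<le> r\<close> by (simp add: min_absorb1)
  then have "(a, min b y) \<in> component T v"
    using xy by (blast intro: component_sym component_trans)
  then have "b \<le> y"
    using assms(7) by (cases "b \<le> y") (auto simp: lex_less_def)
  with \<open>a \<le> x\<close> show "a \<le> x \<and> b \<le> y" ..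
qed

end
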